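(* Fix $0<q<1$ and $0<p<2$, and let $T_q^*(\eta;p)=\inf_{G\in\mathcal G_p(\eta)}T_q(G)$. Then as $\eta\to0$, $$T_q^*(\eta;p)=p\Big(\log\frac1\eta+\log\log\log\frac1\eta\Big)+\log\Big(\frac{1-q}{q}\Big)+o(1).$$
   Context: $E(t)=1-e^{-t}$, $\bar E=1-E$, $\bar G=1-G$. For a probability distribution $F$ on $[1,\infty)$, $(E\#F)(t)=\int E(t/\mu)\,dF(\mu)$. $\mathcal G_p(\eta)=\{E\#F:F$ on $[1,\infty)$, $\int\log^p(\mu)\,dF(\mu)\le\eta^p\}$. FDR functional $T_q(G)=\inf\{t:\bar G(t)\ge\frac1q\bar E(t)\}$ (with $\inf\emptyset=+\infty$). *)

theory Defs
  imports "HOL-Probability.Probability"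
begin

definition Eexp :: "real \<Rightarrow> real" where
  "Eexp t = 1 - exp (- t)"

definition distr_on_1_inf :: "real measure \<Rightarrow> bool" where
  "distr_on_1_inf F \<longleftrightarrow> prob_space F \<and> sets F = sets borel \<and> emeasure F {1..} = 1"

definition mixE :: "real measure \<Rightarrow> real \<Rightarrow> real" where
  "mixE F t = (\<integral>\<mu>. Eexp (t / \<mu>) \<partial>F)"

definition Gclass :: "real \<Rightarrow> real \<Rightarrow> (real \<Rightarrow> real) set" where
  "Gclass p \<eta> = {mixE F | F. distr_on_1_inf F \<and>
       (\<integral>\<^sup>+ \<mu>. ennreal (ln \<mu> powr p) \<partial>F) \<le> ennreal (\<eta> powr p)}"

text \<open>FDR functional T_q(G) = inf {t >= 0. 1 - G t >= (1/q)(1 - E t)}, with inf of empty = +infinity.\<close>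
definition Tq :: "real \<Rightarrow> (real \<Rightarrow> real) \<Rightarrow> ereal" where
  "Tq q G = Inf {ereal t | t. t \<ge> 0 \<and> 1 - G t \<ge> (1 / q) * (1 - Eexp t)}"

definition Tstar :: "real \<Rightarrow> real \<Rightarrow> real \<Rightarrow> ereal" where
  "Tstar q p \<eta> = (INF G \<in> Gclass p \<eta>. Tq q G)"

end

theory Submission
  imports Defs "HOL-Real_Asymp.Real_Asymp"
begin

(* Write L = ln (1 / \<eta>) and r = (1 - q) / q. The moment constraint reads
   \<integral> ln\<^sup>p \<mu> dF \<le> exp (- p L), and since 1 - (E#F)(t) = exp (- t) \<integral> exp (t - t / \<mu>) dF,
   a threshold t \<ge> 0 is admissible iff \<integral> exp (t - t / \<mu>) dF \<ge> 1 + r.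

   Lower bound: for t \<le> T = p L + p ln ln L + ln r - \<epsilon>, minimising T exp (- x) + p ln x over
   x = ln \<mu> gives exp (t - t / \<mu>) \<le> exp (T / L\<^sup>2) + exp T (ln \<mu> / ln L)\<^sup>p, which integrates
   to at most exp (T / L\<^sup>2) + r exp (- \<epsilon>) < 1 + r for large L.

   Upper bound: the mixture with mass w = exp (- p L) / ln\<^sup>p (L ln L) at \<mu> = L ln L and the rest
   at 1 satisfies the moment constraint with equality and is admissible at T + 2 \<epsilon>. *)

lemma ln_ln_le_half_exp_plus_ln:
  fixes L x :: real
  assumes "0 < L" and ln_L: "4 \<le> ln L" and sqrt_L: "ln (ln L) + 2 * ln L \<le> sqrt L / 2"
    and x: "1 / L\<^sup>2 \<le> x"
  shows "ln (ln L) \<le> L / 2 * exp (- x) + ln x"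
proof -
  obtain l where L: "L = exp l" using \<open>0 < L\<close> by (metis exp_ln)
  have l: "4 \<le> l" using ln_L by (simp add: L)
  have "0 < 1 / L\<^sup>2" using \<open>0 < L\<close> by simp
  with x have x0: "0 < x" by linarith
  consider "l \<le> x" | "l / 2 \<le> x" "x \<le> l" | "x \<le> l / 2" by linarith
  then have "ln l - ln x \<le> exp (l - x) / 2"
  proof cases
    case 1
    then have "ln l \<le> ln x" using l by simp
    moreover have "0 < exp (l - x) / 2" by simp
    ultimately show ?thesis by linarith
  next
    case 2
    have "ln l - ln x \<le> l / x - 1"
      using ln_le_minus_one[of "l / x"] x0 l by (simp add: ln_div)
    also have "\<dots> = (l - x) / x" using x0 by (simp add: field_simps)
    also have "\<dots> \<le> (l - x) / (l / 2)" using 2 l by (intro divide_left_mono) auto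
    also have "\<dots> \<le> (1 + (l - x)) / 2"
    proof -
      have "0 \<le> (l - 4) * (l - x)" using 2 l by simp
      then show ?thesis using l by (simp add: field_simps algebra_simps)
    qed
    also have "\<dots> \<le> exp (l - x) / 2" by (rule divide_right_mono[OF exp_ge_add_one_self]) simp
    finally show ?thesis .
  next
    case 3
    have "- 2 * l = ln (1 / L\<^sup>2)" by (simp add: L ln_div ln_realpow)
    also have "\<dots> \<le> ln x" using x x0 by (simp add: L)
    finally have "ln l - ln x \<le> ln l + 2 * l" by simp
    also have "\<dots> \<le> exp (l / 2) / 2"
      using sqrt_L powr_half_sqrt[of L] by (simp add: L powr_def)
    also have "\<dots> \<le> exp (l - x) / 2" using 3 by simp
    finally show ?thesis .
  qed
  moreover have "L / 2 * exp (- x) = exp (l - x) / 2" by (simp add: L exp_diff exp_minus field_simps)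
  ultimately show ?thesis by (simp add: L)
qed

lemma exp_sub_div_le:
  fixes L T p t \<mu> :: real
  assumes "0 < L" "4 \<le> ln L" "ln (ln L) + 2 * ln L \<le> sqrt L / 2"
    and p: "0 < p" and T: "p * L / 2 \<le> T" and t: "0 \<le> t" "t \<le> T" and \<mu>: "1 \<le> \<mu>"
  shows "exp (t - t / \<mu>) \<le> exp (T / L\<^sup>2) + exp T / ln L powr p * ln \<mu> powr p"
proof -
  define x where "x = ln \<mu>"
  have x0: "0 \<le> x" using \<mu> by (simp add: x_def)
  have T0: "0 \<le> T" using T mult_pos_pos[OF p \<open>0 < L\<close>] by linarith
  have "t - t / \<mu> = t * (1 - exp (- x))" using \<mu> by (simp add: x_def exp_minus field_simps)
  also have "\<dots> \<le> T * (1 - exp (- x))" using t x0 by (intro mult_right_mono) auto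
  finally have t_le: "t - t / \<mu> \<le> T * (1 - exp (- x))" .
  have B0: "0 \<le> exp T / ln L powr p * ln \<mu> powr p" by simp
  show ?thesis
  proof (cases "x \<le> 1 / L\<^sup>2")
    case True
    have "T * (1 - exp (- x)) \<le> T * x"
      using exp_ge_add_one_self[of "- x"] T0 by (intro mult_left_mono) auto
    also have "\<dots> \<le> T / L\<^sup>2" using True T0 by (simp add: mult_left_mono divide_inverse)
    finally have "exp (t - t / \<mu>) \<le> exp (T / L\<^sup>2)" using t_le by simp
    then show ?thesis using B0 by linarith
  next
    case False
    moreover have "0 < 1 / L\<^sup>2" using \<open>0 < L\<close> by simp
    ultimately have x_pos: "0 < x" by linarith
    have "p * ln (ln L) \<le> p * (L / 2 * exp (- x) + ln x)"
      using ln_ln_le_half_exp_plus_ln[OF assms(1-3)] False p by (intro mult_left_mono) auto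
    also have "\<dots> \<le> T * exp (- x) + p * ln x"
      using mult_right_mono[OF T, of "exp (- x)"] by (simp add: algebra_simps)
    finally have "T * (1 - exp (- x)) \<le> T - p * ln (ln L) + p * ln x" by (simp add: algebra_simps)
    then have "exp (t - t / \<mu>) \<le> exp (T - p * ln (ln L) + p * ln x)" using t_le by simp
    also have "\<dots> = exp T / ln L powr p * ln \<mu> powr p"
      using x_pos assms(2) by (simp add: x_def powr_def exp_add exp_diff)
    finally show ?thesis using exp_gt_zero[of "T / L\<^sup>2"] by linarith
  qed
qed

lemma distr_on_1_inf_AE_ge_1:
  assumes "distr_on_1_inf F"
  shows "AE \<mu> in F. 1 \<le> \<mu>"
proof -
  interpret prob_space F using assms by (simp add: distr_on_1_inf_def)
  have "{1..} \<in> sets F" and "prob {1..} = 1"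
    using assms by (auto simp: distr_on_1_inf_def emeasure_eq_measure)
  then show ?thesis using AE_in_set_eq_1 by fastforce
qed

lemma distr_on_1_inf_borel_measurable:
  assumes "distr_on_1_inf F" and "f \<in> borel_measurable borel"
  shows "f \<in> borel_measurable F"
proof -
  have "sets F = sets borel" using assms(1) by (simp add: distr_on_1_inf_def)
  then show ?thesis using assms(2) measurable_cong_sets[of F borel borel borel] by blast
qed

lemma integrable_exp_diff_div:
  assumes "distr_on_1_inf F"
  shows "integrable F (\<lambda>\<mu>. exp (a - b / \<mu>))"
proof -
  interpret prob_space F using assms by (simp add: distr_on_1_inf_def)
  have "AE \<mu> in F. norm (exp (a - b / \<mu>)) \<le> exp (a + \<bar>b\<bar>)"
    using distr_on_1_inf_AE_ge_1[OF assms]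
  proof eventually_elim
    case (elim \<mu>)
    have "\<bar>b / \<mu>\<bar> \<le> \<bar>b\<bar>" using elim mult_left_mono[of 1 \<mu> "\<bar>b\<bar>"] by (simp add: abs_div divide_le_eq)
    then have "a - b / \<mu> \<le> a + \<bar>b\<bar>" using abs_ge_minus_self[of "b / \<mu>"] by linarith
    then show ?case by simp
  qed
  moreover have "(\<lambda>\<mu>. exp (a - b / \<mu>)) \<in> borel_measurable F"
    using assms by (rule distr_on_1_inf_borel_measurable) simp
  ultimately show ?thesis by (intro integrable_const_bound)
qed

lemma integral_ln_powr_le:
  assumes F: "distr_on_1_inf F"
    and mom: "(\<integral>\<^sup>+ \<mu>. ennreal (ln \<mu> powr p) \<partial>F) \<le> ennreal (\<eta> powr p)"
  shows "integrable F (\<lambda>\<mu>. ln \<mu> powr p)" and "(\<integral>\<mu>. ln \<mu> powr p \<partial>F) \<le> \<eta> powr p"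
proof -
  show int: "integrable F (\<lambda>\<mu>. ln \<mu> powr p)"
  proof (rule integrableI_bounded)
    show "(\<lambda>\<mu>. ln \<mu> powr p) \<in> borel_measurable F"
      using F by (rule distr_on_1_inf_borel_measurable) simp
    show "(\<integral>\<^sup>+ \<mu>. ennreal (norm (ln \<mu> powr p)) \<partial>F) < \<infinity>"
      using mom by (simp add: order_le_less_trans)
  qed
  have "ennreal (\<integral>\<mu>. ln \<mu> powr p \<partial>F) = (\<integral>\<^sup>+ \<mu>. ennreal (ln \<mu> powr p) \<partial>F)"
    by (rule nn_integral_eq_integral[symmetric, OF int]) simp
  with mom have "ennreal (\<integral>\<mu>. ln \<mu> powr p \<partial>F) \<le> ennreal (\<eta> powr p)" by simp
  then show "(\<integral>\<mu>. ln \<mu> powr p \<partial>F) \<le> \<eta> powr p" by (simp add: ennreal_le_iff)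
qed

lemma one_minus_mixE_eq:
  assumes "distr_on_1_inf F"
  shows "1 - mixE F t = exp (- t) * (\<integral>\<mu>. exp (t - t / \<mu>) \<partial>F)"
proof -
  interpret prob_space F using assms by (simp add: distr_on_1_inf_def)
  have int: "integrable F (\<lambda>\<mu>. exp (- (t / \<mu>)))"
    using integrable_exp_diff_div[OF assms, of 0 t] by simp
  have "mixE F t = (\<integral>\<mu>. 1 - exp (- (t / \<mu>)) \<partial>F)" by (simp add: mixE_def Eexp_def)
  also have "\<dots> = 1 - (\<integral>\<mu>. exp (- (t / \<mu>)) \<partial>F)"
    using int by (simp add: Bochner_Integration.integral_diff prob_space)
  also have "(\<integral>\<mu>. exp (- (t / \<mu>)) \<partial>F) = (\<integral>\<mu>. exp (- t) * exp (t - t / \<mu>) \<partial>F)"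
    by (simp add: mult_exp_exp)
  finally show ?thesis by simp
qed

lemma one_minus_mixE_le:
  assumes F: "distr_on_1_inf F"
    and mom: "(\<integral>\<^sup>+ \<mu>. ennreal (ln \<mu> powr p) \<partial>F) \<le> ennreal (\<eta> powr p)"
    and B: "0 \<le> B" and bound: "\<And>\<mu>. 1 \<le> \<mu> \<Longrightarrow> exp (t - t / \<mu>) \<le> A + B * ln \<mu> powr p"
  shows "1 - mixE F t \<le> exp (- t) * (A + B * \<eta> powr p)"
proof -
  interpret prob_space F using F by (simp add: distr_on_1_inf_def)
  note ln_powr = integral_ln_powr_le[OF F mom]
  have "(\<integral>\<mu>. exp (t - t / \<mu>) \<partial>F) \<le> (\<integral>\<mu>. A + B * ln \<mu> powr p \<partial>F)"
    using distr_on_1_inf_AE_ge_1[OF F] bound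
    by (intro integral_mono_AE integrable_exp_diff_div[OF F]) (auto simp: ln_powr(1))
  also have "\<dots> = A + B * (\<integral>\<mu>. ln \<mu> powr p \<partial>F)"
    using ln_powr(1) by (simp add: prob_space)
  also have "\<dots> \<le> A + B * \<eta> powr p" using ln_powr(2) B by (simp add: mult_left_mono)
  finally show ?thesis by (simp add: one_minus_mixE_eq[OF F])
qed

definition two_point :: "real \<Rightarrow> real \<Rightarrow> real measure" where
  "two_point w M = distr (measure_pmf (bernoulli_pmf w)) borel (\<lambda>b. if b then M else 1)"

lemma distr_on_1_inf_two_point:
  assumes "1 \<le> M"
  shows "distr_on_1_inf (two_point w M)"
proof -
  have "(\<lambda>b. if b then M else 1) -` {1..} = UNIV" using assms by auto
  then have "emeasure (two_point w M) {1..} = 1" by (simp add: two_point_def emeasure_distr)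
  then show ?thesis
    by (simp add: distr_on_1_inf_def two_point_def prob_space.prob_space_distr prob_space_measure_pmf)
qed

lemma nn_integral_ln_powr_two_point:
  assumes "0 \<le> w" "w \<le> 1"
  shows "(\<integral>\<^sup>+ \<mu>. ennreal (ln \<mu> powr p) \<partial>two_point w M) = ennreal (w * ln M powr p)"
  using assms by (simp add: two_point_def nn_integral_distr ennreal_mult' mult.commute)

lemma integral_two_point:
  assumes "0 \<le> w" "w \<le> 1" and "f \<in> borel_measurable borel"
  shows "(\<integral>\<mu>. f \<mu> \<partial>two_point w M) = w * f M + (1 - w) * f 1"
  using assms by (simp add: two_point_def integral_distr)

lemma Tstar_le:
  assumes "G \<in> Gclass p \<eta>" and "0 \<le> t" and "exp (- t) / q \<le> 1 - G t"
  shows "Tstar q p \<eta> \<le> ereal t"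
proof -
  have "Tq q G \<le> ereal t"
    unfolding Tq_def using assms(2,3) by (intro Inf_lower) (auto simp: Eexp_def)
  then show ?thesis unfolding Tstar_def using assms(1) by (meson INF_lower order_trans)
qed

lemma le_Tstar:
  assumes "\<And>G t. G \<in> Gclass p \<eta> \<Longrightarrow> 0 \<le> t \<Longrightarrow> exp (- t) / q \<le> 1 - G t \<Longrightarrow> T \<le> t"
  shows "ereal T \<le> Tstar q p \<eta>"
  unfolding Tstar_def Tq_def using assms by (auto intro!: INF_greatest Inf_greatest simp: Eexp_def)

lemma le_Tstar_exp_neg:
  assumes "0 < L" "4 \<le> ln L" "ln (ln L) + 2 * ln L \<le> sqrt L / 2" and p: "0 < p"
    and T: "p * L / 2 \<le> T"
    and small: "exp (T / L\<^sup>2) + exp T / ln L powr p * exp (- (p * L)) < 1 / q"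
  shows "ereal T \<le> Tstar q p (exp (- L))"
proof (rule le_Tstar, rule ccontr)
  fix G t
  assume "G \<in> Gclass p (exp (- L))" and t: "0 \<le> t" and crossing: "exp (- t) / q \<le> 1 - G t"
    and "\<not> T \<le> t"
  then obtain F where G: "G = mixE F" and F: "distr_on_1_inf F"
    and mom: "(\<integral>\<^sup>+ \<mu>. ennreal (ln \<mu> powr p) \<partial>F) \<le> ennreal (exp (- L) powr p)"
    unfolding Gclass_def by auto
  have "1 - G t \<le> exp (- t) * (exp (T / L\<^sup>2) + exp T / ln L powr p * exp (- L) powr p)"
    unfolding G using F mom
    by (rule one_minus_mixE_le) (use exp_sub_div_le[OF assms(1-3) p T t] \<open>\<not> T \<le> t\<close> in auto)
  also have "\<dots> < exp (- t) / q"
    using small by (simp add: powr_def divide_inverse)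
  finally show False using crossing by simp
qed

lemma Tstar_le_two_point:
  assumes M: "1 \<le> M" and w: "0 \<le> w" "w \<le> 1" and mom: "w * ln M powr p \<le> \<eta> powr p"
    and t: "0 \<le> t" and gain: "1 / q - 1 \<le> w * (exp (t - t / M) - 1)"
  shows "Tstar q p \<eta> \<le> ereal t"
proof (rule Tstar_le[OF _ t])
  show "mixE (two_point w M) \<in> Gclass p \<eta>"
    unfolding Gclass_def using distr_on_1_inf_two_point[OF M] nn_integral_ln_powr_two_point[OF w] mom
    by (auto intro: ennreal_leI)
  have "exp (- t) / q = exp (- t) + exp (- t) * (1 / q - 1)" by (simp add: field_simps)
  also have "\<dots> \<le> exp (- t) + exp (- t) * (w * (exp (t - t / M) - 1))"
    using gain by simp
  also have "\<dots> = w * exp (- (t / M)) + (1 - w) * exp (- t)"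
    by (simp add: algebra_simps flip: exp_add)
  also have "\<dots> = 1 - mixE (two_point w M) t"
    using w by (simp add: mixE_def integral_two_point Eexp_def algebra_simps)
  finally show "exp (- t) / q \<le> 1 - mixE (two_point w M) t" .
qed

lemma Tstar_lower_eventually:
  fixes q p \<epsilon> :: real
  assumes q: "0 < q" "q < 1" and p: "0 < p" and \<epsilon>: "0 < \<epsilon>"
  defines "r \<equiv> (1 - q) / q"
  shows "\<forall>\<^sub>F L in at_top. ereal (p * L + p * ln (ln L) + ln r - \<epsilon>) \<le> Tstar q p (exp (- L))"
proof -
  define T where "T L = p * L + p * ln (ln L) + ln r - \<epsilon>" for L
  have r: "0 < r" and r_q: "1 + r = 1 / q" using q by (auto simp: r_def field_simps)
  have "((\<lambda>L. exp (T L / L\<^sup>2) + exp (T L) / ln L powr p * exp (- (p * L)))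
        \<longlongrightarrow> 1 + exp (ln r - \<epsilon>)) at_top"
    unfolding T_def using p by real_asymp
  moreover have "1 + exp (ln r - \<epsilon>) < 1 / q"
  proof -
    have "r / exp \<epsilon> < r" using r \<epsilon> by (simp add: divide_less_eq)
    then show ?thesis using r r_q by (simp add: exp_diff)
  qed
  ultimately have small:
    "\<forall>\<^sub>F L in at_top. exp (T L / L\<^sup>2) + exp (T L) / ln L powr p * exp (- (p * L)) < 1 / q"
    by (rule order_tendstoD(2))
  have "\<forall>\<^sub>F L in at_top. 0 < L \<and> 4 \<le> ln L \<and> ln (ln L) + 2 * ln L \<le> sqrt L / 2 \<and> p * L / 2 \<le> T L"
    unfolding T_def using p by (intro eventually_conj) real_asymp+
  with small show ?thesis
    by eventually_elim (use le_Tstar_exp_neg p in \<open>auto simp: T_def\<close>)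
qed

lemma Tstar_upper_eventually:
  fixes q p \<epsilon> :: real
  assumes q: "0 < q" "q < 1" and p: "0 < p" and \<epsilon>: "0 < \<epsilon>"
  defines "r \<equiv> (1 - q) / q"
  shows "\<forall>\<^sub>F L in at_top. Tstar q p (exp (- L)) \<le> ereal (p * L + p * ln (ln L) + ln r + \<epsilon>)"
proof -
  define t where "t L = p * L + p * ln (ln L) + ln r + \<epsilon>" for L
  define w where "w L = exp (- (p * L)) / ln (L * ln L) powr p" for L
  have r: "0 < r" and r_q: "r = 1 / q - 1" using q by (auto simp: r_def field_simps)
  have "((\<lambda>L. w L * (exp (t L - t L / (L * ln L)) - 1)) \<longlongrightarrow> exp (ln r + \<epsilon>)) at_top"
    unfolding t_def w_def using p by real_asymp
  moreover have "r < exp (ln r + \<epsilon>)"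
    using r \<epsilon> by (simp add: exp_add)
  ultimately have gain: "\<forall>\<^sub>F L in at_top. 1 / q - 1 \<le> w L * (exp (t L - t L / (L * ln L)) - 1)"
    unfolding r_q by (rule eventually_mono[OF order_tendstoD(1)]) simp
  have "\<forall>\<^sub>F L in at_top. 1 < L * ln L \<and> w L \<le> 1 \<and> 0 \<le> t L"
    unfolding t_def w_def using p by (intro eventually_conj) real_asymp+
  with gain show ?thesis
  proof eventually_elim
    case (elim L)
    have "0 < ln (L * ln L) powr p" using elim by simp
    then have "w L * ln (L * ln L) powr p = exp (- L) powr p"
      by (simp add: w_def powr_def)
    with elim have "Tstar q p (exp (- L)) \<le> ereal (t L)"
      by (intro Tstar_le_two_point[where M = "L * ln L" and w = "w L"]) (auto simp: w_def)
    then show ?case by (simp add: t_def)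
  qed
qed

lemma tendsto_ereal_diff_zeroI:
  fixes f :: "'a \<Rightarrow> ereal" and g :: "'a \<Rightarrow> real"
  assumes "\<And>\<epsilon>. 0 < \<epsilon> \<Longrightarrow> \<forall>\<^sub>F x in F. ereal (g x - \<epsilon>) \<le> f x \<and> f x \<le> ereal (g x + \<epsilon>)"
  shows "((\<lambda>x. f x - ereal (g x)) \<longlongrightarrow> 0) F"
proof (rule order_tendstoI)
  fix a :: ereal
  assume "a < 0"
  then obtain z where a: "a < ereal z" and "z < 0" using ereal_dense2 by force
  from \<open>z < 0\<close> have "0 < - z" by simp
  from assms[OF this] show "\<forall>\<^sub>F x in F. a < f x - ereal (g x)"
  proof eventually_elim
    case (elim x)
    then have "ereal z \<le> f x - ereal (g x)" by (cases "f x") auto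
    with a show ?case by (rule less_le_trans)
  qed
next
  fix a :: ereal
  assume "0 < a"
  then obtain z where a: "ereal z < a" and "0 < z" using ereal_dense2 by force
  from assms[OF \<open>0 < z\<close>] show "\<forall>\<^sub>F x in F. f x - ereal (g x) < a"
  proof eventually_elim
    case (elim x)
    then have "f x - ereal (g x) \<le> ereal z" by (cases "f x") auto
    then show ?case using a by (rule le_less_trans)
  qed
qed

theorem lemma5p2:
  fixes q p :: real
  assumes "0 < q" "q < 1" "0 < p" "p < 2"
  shows "((\<lambda>\<eta>. Tstar q p \<eta> - ereal (p * (ln (1 / \<eta>) + ln (ln (ln (1 / \<eta>))))
                                  + ln ((1 - q) / q)))
          \<longlongrightarrow> 0) (at_right 0)"
proof -
  define c where "c \<eta> = p * (ln (1 / \<eta>) + ln (ln (ln (1 / \<eta>)))) + ln ((1 - q) / q)" for \<eta> :: real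
  have "\<forall>\<^sub>F \<eta> in at_right 0. ereal (c \<eta> - \<epsilon>) \<le> Tstar q p \<eta> \<and> Tstar q p \<eta> \<le> ereal (c \<eta> + \<epsilon>)"
    if "0 < \<epsilon>" for \<epsilon>
  proof -
    have "\<forall>\<^sub>F L in at_top.
        ereal (p * L + p * ln (ln L) + ln ((1 - q) / q) - \<epsilon>) \<le> Tstar q p (exp (- L))
        \<and> Tstar q p (exp (- L)) \<le> ereal (p * L + p * ln (ln L) + ln ((1 - q) / q) + \<epsilon>)"
      using Tstar_lower_eventually[OF assms(1-3) that] Tstar_upper_eventually[OF assms(1-3) that]
      by (rule eventually_conj)
    moreover have "filterlim (\<lambda>\<eta>::real. ln (1 / \<eta>)) at_top (at_right 0)" by real_asymp
    ultimately have "\<forall>\<^sub>F \<eta> in at_right 0. ereal (c \<eta> - \<epsilon>) \<le> Tstar q p (exp (- ln (1 / \<eta>)))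
        \<and> Tstar q p (exp (- ln (1 / \<eta>))) \<le> ereal (c \<eta> + \<epsilon>)"
      unfolding c_def by (rule eventually_compose_filterlim[THEN eventually_mono]) (simp add: algebra_simps)
    with eventually_at_right_less[of 0] show ?thesis
      by eventually_elim (simp add: ln_div)
  qed
  then have "((\<lambda>\<eta>. Tstar q p \<eta> - ereal (c \<eta>)) \<longlongrightarrow> 0) (at_right 0)"
    by (rule tendsto_ereal_diff_zeroI)
  then show ?thesis by (simp only: c_def)
qed

end
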